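(* Let $X$ be a compact metric space and $F\colon X\to 2^X$ a set-valued mapping. The set of $F$-invariant Borel probability measures whose support is all of $X$ is either empty or a dense $G_\delta$ subset of the space of $F$-invariant Borel probability measures on $X$ (with the weak$^*$ topology).
   Context: $2^X$ is the space of nonempty closed subsets of $X$; a set-valued mapping is an upper semicontinuous $F\colon X\to 2^X$; $F^{-1}(B)=\{y\in X: F(y)\cap B\neq\emptyset\}$ for $B\subset X$. A Borel probability measure $\mu$ on $X$ is $F$-invariant if $\mu(B)\le\mu(F^{-1}(B))$ for every Borel set $B\subset X$. The support of $\mu$ is all of $X$ (full support) if $\mu(U)>0$ for every nonempty open $U\subset X$. *)

theory Defs
  imports "HOL-Probability.Probability"
begin

text \<open>Set-valued mapping on X (the whole type): nonempty closed values, upper semicontinuous.\<close>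
definition set_valued_map :: "('a::topological_space \<Rightarrow> 'a set) \<Rightarrow> bool" where
  "set_valued_map F \<longleftrightarrow>
     (\<forall>x. F x \<noteq> {} \<and> closed (F x)) \<and>
     (\<forall>U. open U \<longrightarrow> open {x. F x \<subseteq> U})"

definition preimage_sv :: "('a \<Rightarrow> 'a set) \<Rightarrow> 'a set \<Rightarrow> 'a set" where
  "preimage_sv F B = {y. F y \<inter> B \<noteq> {}}"

definition borel_prob_measures :: "'a::topological_space measure set" where
  "borel_prob_measures = {M. sets M = sets borel \<and> prob_space M}"

text \<open>F^{-1}(B) need not be Borel (it is analytic, hence universally measurable);
  its measure is taken as the outer measure, i.e. the measure w.r.t. the completion.\<close>
definition F_invariant :: "('a::topological_space \<Rightarrow> 'a set) \<Rightarrow> 'a measure \<Rightarrow> bool" where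
  "F_invariant F M \<longleftrightarrow>
     (\<forall>B \<in> sets borel. emeasure M B \<le> outer_measure_of M (preimage_sv F B))"

definition invariant_measures :: "('a::topological_space \<Rightarrow> 'a set) \<Rightarrow> 'a measure set" where
  "invariant_measures F = {M \<in> borel_prob_measures. F_invariant F M}"

definition full_support :: "'a::topological_space measure \<Rightarrow> bool" where
  "full_support M \<longleftrightarrow> (\<forall>U. open U \<and> U \<noteq> {} \<longrightarrow> emeasure M U > 0)"

text \<open>Weak-* topology on Borel probability measures: the coarsest topology making
  all maps M \<mapsto> \<integral> f dM (f continuous real-valued; X compact, so bounded) continuous.\<close>
definition weak_star_topology :: "'a::topological_space measure topology" where
  "weak_star_topology = topology_generated_by
     {{M \<in> borel_prob_measures. (\<integral>x. f x \<partial>M) \<in> U} | f U.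
        continuous_on UNIV (f :: 'a \<Rightarrow> real) \<and> open U}"

end

theory Submission
  imports Defs
begin

text \<open>The \<open>F\<close>-invariant Borel probability measures form a convex set: invariance is
  preserved by mixtures \<open>t \<mu> + (1 - t) \<nu>\<close>. If \<open>\<mu>\<close> has full support, so has every such
  mixture with \<open>t > 0\<close>, and as \<open>t \<rightarrow> 0\<close> the mixtures converge weak-* to \<open>\<nu>\<close> because each
  \<open>\<integral> f\<close> is affine in \<open>t\<close>; so the full-support invariant measures are dense. Full support
  amounts to positivity on the countably many balls of finite \<open>1/n\<close>-nets of the compact space,
  and for open \<open>U\<close> the condition \<open>\<mu> U > 0\<close> is weak-* open, being \<open>\<integral> f d\<mu> > 0\<close> for a
  continuous \<open>f \<ge> 0\<close> that is positive exactly on \<open>U\<close>; so they also form a \<open>G\<^sub>\<delta>\<close>.\<close>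

section \<open>Mixtures of measures\<close>

definition add_measure :: "'a measure \<Rightarrow> 'a measure \<Rightarrow> 'a measure" where
  "add_measure M N = measure_of (space M) (sets M) (\<lambda>A. emeasure M A + emeasure N A)"

lemma space_add_measure [simp]: "space (add_measure M N) = space M"
  by (simp add: add_measure_def)

lemma sets_add_measure [simp, measurable_cong]: "sets (add_measure M N) = sets M"
  by (simp add: add_measure_def)

lemma emeasure_add_measure [simp]:
  assumes "sets N = sets M"
  shows "emeasure (add_measure M N) A = emeasure M A + emeasure N A"
proof (cases "A \<in> sets M")
  case True
  show ?thesis unfolding add_measure_def
  proof (rule emeasure_measure_of_sigma)
    show "sigma_algebra (space M) (sets M)" ..
    show "positive (sets M) (\<lambda>A. emeasure M A + emeasure N A)"
      by (simp add: positive_def)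
    show "countably_additive (sets M) (\<lambda>A. emeasure M A + emeasure N A)"
    proof (rule countably_additiveI)
      fix A :: "nat \<Rightarrow> _" assume "range A \<subseteq> sets M" "disjoint_family A"
      then show "(\<Sum>i. emeasure M (A i) + emeasure N (A i)) = emeasure M (\<Union>i. A i) + emeasure N (\<Union>i. A i)"
        using assms by (simp add: suminf_add[OF summableI summableI, symmetric] suminf_emeasure)
    qed
  qed fact
qed (use assms in \<open>simp add: emeasure_notin_sets\<close>)

lemma nn_integral_add_measure:
  assumes "sets N = sets M" and "f \<in> borel_measurable M"
  shows "nn_integral (add_measure M N) f = nn_integral M f + nn_integral N f"
  using assms(2)
proof induction
  case (cong f g)
  have "space N = space M" using sets_eq_imp_space_eq[OF assms(1)] .
  with cong show ?case
    by (simp cong: nn_integral_cong_simp)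
next
  case (set A)
  then show ?case using assms(1) by simp
next
  case (mult f c)
  then show ?case using assms(1)
    by (simp add: nn_integral_cmult distrib_left measurable_cong_sets[OF assms(1) refl, symmetric])
next
  case (add f g)
  then show ?case using assms(1)
    by (simp add: nn_integral_add measurable_cong_sets[OF assms(1) refl, symmetric] add_ac)
next
  case (seq U)
  then show ?case using assms(1)
    by (simp add: nn_integral_monotone_convergence_SUP image_comp ennreal_SUP_add
        incseq_nn_integral measurable_cong_sets[OF assms(1) refl, symmetric])
qed

definition mix_measure :: "real \<Rightarrow> 'a measure \<Rightarrow> 'a measure \<Rightarrow> 'a measure" where
  "mix_measure t M N = add_measure (scale_measure (ennreal t) M) (scale_measure (ennreal (1 - t)) N)"

lemma space_mix_measure [simp]: "space (mix_measure t M N) = space M"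
  by (simp add: mix_measure_def space_scale_measure)

lemma sets_mix_measure [simp, measurable_cong]: "sets (mix_measure t M N) = sets M"
  by (simp add: mix_measure_def)

lemma emeasure_mix_measure:
  assumes "sets N = sets M"
  shows "emeasure (mix_measure t M N) A = ennreal t * emeasure M A + ennreal (1 - t) * emeasure N A"
  using assms by (simp add: mix_measure_def)

lemma nn_integral_mix_measure:
  assumes "sets N = sets M" and "f \<in> borel_measurable M"
  shows "nn_integral (mix_measure t M N) f = ennreal t * nn_integral M f + ennreal (1 - t) * nn_integral N f"
  using assms by (simp add: mix_measure_def nn_integral_add_measure nn_integral_scale_measure
      measurable_cong_sets[OF assms(1) refl, symmetric])

lemma mix_measure_0:
  assumes "sets N = sets M"
  shows "mix_measure 0 M N = N"
  using assms by (intro measure_eqI) (simp_all add: emeasure_mix_measure)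

lemma prob_space_mix_measure:
  assumes "prob_space M" "prob_space N" "sets N = sets M" "0 \<le> t" "t \<le> 1"
  shows "prob_space (mix_measure t M N)"
proof
  have "emeasure N (space M) = 1"
    using prob_space.emeasure_space_1[OF assms(2)] sets_eq_imp_space_eq[OF assms(3)] by simp
  then show "emeasure (mix_measure t M N) (space (mix_measure t M N)) = 1"
    using assms by (simp add: emeasure_mix_measure prob_space.emeasure_space_1 ennreal_plus[symmetric])
qed

lemma prob_space_integrable_bounded:
  fixes f :: "'a \<Rightarrow> real"
  assumes "prob_space M" "f \<in> borel_measurable M" "\<And>x. \<bar>f x\<bar> \<le> C"
  shows "integrable M f"
proof -
  interpret prob_space M by fact
  show ?thesis
    using assms(2,3) by (intro integrable_const_bound[where B=C] AE_I2) auto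
qed

lemma integral_mix_measure_nonneg:
  fixes g :: "'a \<Rightarrow> real"
  assumes M: "prob_space M" and N: "prob_space N" and sets: "sets N = sets M"
    and t: "0 \<le> t" "t \<le> 1"
    and g: "g \<in> borel_measurable M" "\<And>x. 0 \<le> g x" "\<And>x. g x \<le> C"
  shows "integral\<^sup>L (mix_measure t M N) g = t * integral\<^sup>L M g + (1 - t) * integral\<^sup>L N g"
proof -
  let ?mix = "mix_measure t M N"
  have nn_integral: "(\<integral>\<^sup>+x. ennreal (g x) \<partial>P) = ennreal (integral\<^sup>L P g)"
    if "prob_space P" "sets P = sets M" for P
  proof (intro nn_integral_eq_integral prob_space_integrable_bounded[OF that(1)])
    show "g \<in> borel_measurable P"
      using g(1) by (simp add: measurable_cong_sets[OF that(2) refl])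
  qed (use g(2,3) abs_of_nonneg in auto)
  have nonneg: "0 \<le> integral\<^sup>L P g" for P
    using g(2) by (rule integral_nonneg_AE[OF AE_I2])
  have "ennreal (integral\<^sup>L ?mix g)
      = ennreal t * ennreal (integral\<^sup>L M g) + ennreal (1 - t) * ennreal (integral\<^sup>L N g)"
    using nn_integral_mix_measure[OF sets, of "\<lambda>x. ennreal (g x)" t] g(1)
    by (simp add: nn_integral prob_space_mix_measure M N sets t)
  also have "\<dots> = ennreal (t * integral\<^sup>L M g + (1 - t) * integral\<^sup>L N g)"
    using t nonneg by (simp add: ennreal_mult ennreal_plus)
  finally show ?thesis
    using t nonneg by (subst (asm) ennreal_inj) auto
qed

lemma integral_mix_measure:
  fixes f :: "'a \<Rightarrow> real"
  assumes M: "prob_space M" and N: "prob_space N" and sets: "sets N = sets M"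
    and t: "0 \<le> t" "t \<le> 1"
    and f: "f \<in> borel_measurable M" and bound: "\<And>x. \<bar>f x\<bar> \<le> C"
  shows "integral\<^sup>L (mix_measure t M N) f = t * integral\<^sup>L M f + (1 - t) * integral\<^sup>L N f"
proof -
  have shift: "integral\<^sup>L P (\<lambda>x. f x + C) = integral\<^sup>L P f + C"
    if "prob_space P" "sets P = sets M" for P
  proof -
    interpret prob_space P by fact
    have "integrable P f"
      using f bound by (intro prob_space_integrable_bounded that(1))
        (simp_all add: measurable_cong_sets[OF that(2) refl])
    then show ?thesis by (simp add: prob_space)
  qed
  have "0 \<le> f x + C" "f x + C \<le> 2 * C" for x
    using bound[of x] by (auto simp: abs_le_iff)
  with f have "integral\<^sup>L (mix_measure t M N) (\<lambda>x. f x + C)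
      = t * integral\<^sup>L M (\<lambda>x. f x + C) + (1 - t) * integral\<^sup>L N (\<lambda>x. f x + C)"
    by (intro integral_mix_measure_nonneg[OF M N sets t, where C="2 * C"]) auto
  then show ?thesis
    using shift[OF prob_space_mix_measure[OF M N sets t]] shift[OF M] shift[OF N sets]
    by (simp add: algebra_simps)
qed

lemma outer_measure_of_mix_measure_ge:
  assumes "sets N = sets M"
  shows "ennreal t * outer_measure_of M A + ennreal (1 - t) * outer_measure_of N A
    \<le> outer_measure_of (mix_measure t M N) A"
  unfolding outer_measure_of_def[of "mix_measure t M N"]
proof (rule INF_greatest)
  fix E assume "E \<in> {E \<in> sets (mix_measure t M N). A \<subseteq> E}"
  then have "outer_measure_of M A \<le> emeasure M E" "outer_measure_of N A \<le> emeasure N E"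
    using assms by (auto simp: outer_measure_of_def intro!: INF_lower)
  then show "ennreal t * outer_measure_of M A + ennreal (1 - t) * outer_measure_of N A
      \<le> emeasure (mix_measure t M N) E"
    using assms by (simp add: emeasure_mix_measure add_mono mult_left_mono)
qed

lemma full_support_mix_measure:
  assumes "full_support M" "sets N = sets M" "0 < t"
  shows "full_support (mix_measure t M N)"
  unfolding full_support_def
proof (intro allI impI)
  fix U :: "'a set" assume "open U \<and> U \<noteq> {}"
  then have "0 < ennreal t * emeasure M U"
    using assms by (simp add: full_support_def ennreal_zero_less_mult_iff)
  also have "\<dots> \<le> emeasure (mix_measure t M N) U"
    using assms(2) by (simp add: emeasure_mix_measure)
  finally show "0 < emeasure (mix_measure t M N) U" .
qed

section \<open>Convexity of the invariant measures\<close>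

lemma space_borel_prob_measure:
  "M \<in> borel_prob_measures \<Longrightarrow> space M = UNIV"
  using sets_eq_imp_space_eq[of M borel] by (simp add: borel_prob_measures_def)

lemma mix_measure_in_borel_prob_measures:
  assumes "M \<in> borel_prob_measures" "N \<in> borel_prob_measures" "0 \<le> t" "t \<le> 1"
  shows "mix_measure t M N \<in> borel_prob_measures"
  using assms by (auto simp: borel_prob_measures_def intro!: prob_space_mix_measure)

lemma mix_measure_in_invariant_measures:
  assumes "M \<in> invariant_measures F" "N \<in> invariant_measures F" "0 \<le> t" "t \<le> 1"
  shows "mix_measure t M N \<in> invariant_measures F"
proof -
  have sets: "sets M = sets borel" "sets N = sets borel"
    using assms by (auto simp: invariant_measures_def borel_prob_measures_def)
  have "F_invariant F (mix_measure t M N)"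
    unfolding F_invariant_def
  proof
    fix B :: "'a set" assume "B \<in> sets borel"
    then have "emeasure (mix_measure t M N) B
        \<le> ennreal t * outer_measure_of M (preimage_sv F B) + ennreal (1 - t) * outer_measure_of N (preimage_sv F B)"
      using assms sets by (auto simp: emeasure_mix_measure invariant_measures_def F_invariant_def
          intro!: add_mono mult_left_mono)
    also have "\<dots> \<le> outer_measure_of (mix_measure t M N) (preimage_sv F B)"
      using sets by (intro outer_measure_of_mix_measure_ge) simp
    finally show "emeasure (mix_measure t M N) B \<le> outer_measure_of (mix_measure t M N) (preimage_sv F B)" .
  qed
  with assms show ?thesis
    by (auto simp: invariant_measures_def intro: mix_measure_in_borel_prob_measures)
qed

section \<open>The weak-* topology\<close>

lemma continuous_map_topology_generated_by:
  assumes "g \<in> topspace X \<rightarrow> \<Union>\<S>"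
    and "\<And>S. S \<in> \<S> \<Longrightarrow> openin X {x \<in> topspace X. g x \<in> S}"
  shows "continuous_map X (topology_generated_by \<S>) g"
  unfolding continuous_map_def
proof (intro conjI allI impI)
  show "g \<in> topspace X \<rightarrow> topspace (topology_generated_by \<S>)"
    using assms(1) by simp
  fix U assume "openin (topology_generated_by \<S>) U"
  then have "generate_topology_on \<S> U"
    by (rule openin_topology_generated_by)
  then show "openin X {x \<in> topspace X. g x \<in> U}"
  proof induction
    case (Int a b)
    have "{x \<in> topspace X. g x \<in> a \<inter> b} = {x \<in> topspace X. g x \<in> a} \<inter> {x \<in> topspace X. g x \<in> b}"
      by blast
    with Int show ?case by auto
  next
    case (UN K)
    have "{x \<in> topspace X. g x \<in> \<Union>K} = (\<Union>k\<in>K. {x \<in> topspace X. g x \<in> k})"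
      by blast
    with UN show ?case by auto
  qed (use assms(2) in auto)
qed

definition weak_star_subbasis :: "'a::topological_space measure set set" where
  "weak_star_subbasis = {{M \<in> borel_prob_measures. (\<integral>x. f x \<partial>M) \<in> U} | f U.
     continuous_on UNIV (f :: 'a \<Rightarrow> real) \<and> open U}"

lemma weak_star_topology_eq: "weak_star_topology = topology_generated_by weak_star_subbasis"
  by (simp add: weak_star_topology_def weak_star_subbasis_def)

lemma openin_weak_star_topology_integral:
  assumes "continuous_on UNIV (f :: 'a::topological_space \<Rightarrow> real)" "open U"
  shows "openin weak_star_topology {M \<in> borel_prob_measures. (\<integral>x. f x \<partial>M) \<in> U}"
  unfolding weak_star_topology_eq
  by (rule topology_generated_by_Basis) (use assms in \<open>auto simp: weak_star_subbasis_def\<close>)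

lemma Union_weak_star_subbasis: "\<Union>weak_star_subbasis = borel_prob_measures"
proof (intro equalityI subsetI)
  fix M :: "'a measure" assume "M \<in> borel_prob_measures"
  then show "M \<in> \<Union>weak_star_subbasis"
    unfolding weak_star_subbasis_def
    by (intro UnionI[of borel_prob_measures]) (auto intro!: exI[of _ "\<lambda>_. 0"] exI[of _ UNIV])
qed (auto simp: weak_star_subbasis_def)

lemma topspace_weak_star_topology [simp]: "topspace weak_star_topology = borel_prob_measures"
  by (simp add: weak_star_topology_eq Union_weak_star_subbasis)

lemma continuous_map_weak_star_topology:
  assumes "g \<in> topspace X \<rightarrow> borel_prob_measures"
    and "\<And>f. continuous_on UNIV (f :: 'a::topological_space \<Rightarrow> real) \<Longrightarrow>
      continuous_map X euclideanreal (\<lambda>x. \<integral>y. f y \<partial>g x)"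
  shows "continuous_map X weak_star_topology g"
  unfolding weak_star_topology_eq
proof (rule continuous_map_topology_generated_by)
  show "g \<in> topspace X \<rightarrow> \<Union>weak_star_subbasis"
    using assms(1) by (simp add: Union_weak_star_subbasis)
next
  fix S assume "S \<in> (weak_star_subbasis :: 'a measure set set)"
  then obtain f U where f: "continuous_on UNIV (f :: 'a \<Rightarrow> real)" and "open U"
    and S: "S = {M \<in> borel_prob_measures. (\<integral>x. f x \<partial>M) \<in> U}"
    unfolding weak_star_subbasis_def by blast
  have "{x \<in> topspace X. g x \<in> S} = {x \<in> topspace X. (\<integral>y. f y \<partial>g x) \<in> U}"
    using assms(1) S by auto
  then show "openin X {x \<in> topspace X. g x \<in> S}"
    using openin_continuous_map_preimage[OF assms(2)[OF f], of U] \<open>open U\<close> by simp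
qed

lemma continuous_map_mix_measure:
  fixes M N :: "'a::metric_space measure"
  assumes "compact (UNIV :: 'a set)" "M \<in> borel_prob_measures" "N \<in> borel_prob_measures"
  shows "continuous_map (top_of_set {0..1}) weak_star_topology (\<lambda>t. mix_measure t M N)"
proof (rule continuous_map_weak_star_topology)
  show "(\<lambda>t. mix_measure t M N) \<in> topspace (top_of_set {0..1}) \<rightarrow> borel_prob_measures"
    using assms by (auto intro: mix_measure_in_borel_prob_measures)
next
  fix f :: "'a \<Rightarrow> real" assume f: "continuous_on UNIV f"
  have "bounded (range f)"
    using compact_continuous_image[OF f assms(1)] by (rule compact_imp_bounded)
  then obtain C where C: "\<And>x. \<bar>f x\<bar> \<le> C"
    by (auto simp: bounded_iff)
  have "continuous_map (top_of_set {0..1}) euclideanreal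
      (\<lambda>t. t * (\<integral>x. f x \<partial>M) + (1 - t) * (\<integral>x. f x \<partial>N))"
    by (simp add: continuous_map_iff_continuous continuous_intros)
  moreover have "t * (\<integral>x. f x \<partial>M) + (1 - t) * (\<integral>x. f x \<partial>N) = (\<integral>x. f x \<partial>mix_measure t M N)"
    if "t \<in> {0..1}" for t
    using assms(2,3) that C borel_measurable_continuous_onI[OF f]
    by (intro integral_mix_measure[symmetric]) (auto simp: borel_prob_measures_def)
  ultimately show "continuous_map (top_of_set {0..1}) euclideanreal (\<lambda>t. \<integral>x. f x \<partial>mix_measure t M N)"
    by (rule continuous_map_eq) simp
qed

lemma open_eq_positive_set:
  fixes U :: "'a::metric_space set"
  assumes "open U"
  obtains f :: "'a \<Rightarrow> real"
  where "continuous_on UNIV f" "\<And>x. 0 \<le> f x" "\<And>x. f x \<le> 1" "\<And>x. 0 < f x \<longleftrightarrow> x \<in> U"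
proof (cases "U = UNIV")
  case True
  then show ?thesis by (intro that[of "\<lambda>_. 1"]) auto
next
  case False
  show ?thesis
  proof (intro that[of "\<lambda>x. min 1 (infdist x (- U))"])
    fix x
    have "0 < infdist x (- U) \<longleftrightarrow> x \<in> U"
      using assms False infdist_pos_not_in_closed[of "- U" x] infdist_zero[of x "- U"]
      by (cases "x \<in> U") (auto simp: closed_Compl)
    then show "0 < min 1 (infdist x (- U)) \<longleftrightarrow> x \<in> U" by simp
  qed (auto intro!: continuous_intros infdist_nonneg)
qed

lemma integral_pos_iff_emeasure_pos:
  fixes f :: "'a \<Rightarrow> real"
  assumes "integrable M f" "\<And>x. 0 \<le> f x"
  shows "0 < integral\<^sup>L M f \<longleftrightarrow> 0 < emeasure M {x \<in> space M. 0 < f x}"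
proof -
  have "{x \<in> space M. 0 < f x} \<in> sets M"
    using assms(1) by measurable
  moreover have "{x \<in> space M. \<not> f x = 0} = {x \<in> space M. 0 < f x}"
    using assms(2) by (auto simp: order_less_le)
  ultimately have "(AE x in M. f x = 0) \<longleftrightarrow> emeasure M {x \<in> space M. 0 < f x} = 0"
    by (rule AE_iff_measurable)
  moreover have "0 \<le> integral\<^sup>L M f"
    using assms(2) by simp
  ultimately show ?thesis
    using integral_nonneg_eq_0_iff_AE[OF assms(1)] assms(2) by (auto simp: order_less_le)
qed

lemma openin_weak_star_topology_emeasure_pos:
  fixes U :: "'a::metric_space set"
  assumes "open U"
  shows "openin weak_star_topology {M \<in> borel_prob_measures. 0 < emeasure M U}"
proof -
  obtain f :: "'a \<Rightarrow> real" where f: "continuous_on UNIV f" "\<And>x. 0 \<le> f x" "\<And>x. f x \<le> 1"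
    and pos: "\<And>x. 0 < f x \<longleftrightarrow> x \<in> U"
    using open_eq_positive_set[OF assms] by blast
  have "0 < emeasure M U \<longleftrightarrow> (\<integral>x. f x \<partial>M) \<in> {0<..}" if M: "M \<in> borel_prob_measures" for M
  proof -
    interpret prob_space M using M by (simp add: borel_prob_measures_def)
    have "integrable M f"
      using f M borel_measurable_continuous_onI[OF f(1)]
      by (intro prob_space_integrable_bounded[where C=1]) (auto simp: borel_prob_measures_def)
    moreover have "{x \<in> space M. 0 < f x} = U"
      using space_borel_prob_measure[OF M] pos by auto
    ultimately show ?thesis
      using integral_pos_iff_emeasure_pos[of M f] f(2) by simp
  qed
  then have "{M \<in> borel_prob_measures. 0 < emeasure M U}
      = {M \<in> borel_prob_measures. (\<integral>x. f x \<partial>M) \<in> {0<..}}"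
    by blast
  then show ?thesis
    using openin_weak_star_topology_integral[OF f(1) open_greaterThan] by simp
qed

section \<open>Measures of full support\<close>

lemma closure_of_full_support_measures:
  fixes P :: "'a::metric_space measure set"
  assumes "compact (UNIV :: 'a set)" "P \<subseteq> borel_prob_measures"
    and "\<And>M N t. M \<in> P \<Longrightarrow> N \<in> P \<Longrightarrow> 0 \<le> t \<Longrightarrow> t \<le> 1 \<Longrightarrow> mix_measure t M N \<in> P"
    and "M \<in> P" "full_support M"
  shows "subtopology weak_star_topology P closure_of {N \<in> P. full_support N} = P"
proof -
  let ?X = "subtopology weak_star_topology P"
  have "?X closure_of {N \<in> P. full_support N} \<subseteq> P"
    using closure_of_subset_topspace[of ?X] assms(2) by auto
  moreover have "N \<in> ?X closure_of {N \<in> P. full_support N}" if "N \<in> P" for N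
  proof -
    let ?path = "\<lambda>t. mix_measure t M N"
    have sets: "sets N = sets M"
      using assms(2,4) that by (auto simp: borel_prob_measures_def)
    have "continuous_map (top_of_set {0..1}) ?X ?path"
      using assms that by (auto simp: continuous_map_in_subtopology intro!: continuous_map_mix_measure)
    then have "?path ` (top_of_set {0..1} closure_of {0<..1}) \<subseteq> ?X closure_of (?path ` {0<..1})"
      by (rule continuous_map_image_closure_subset)
    moreover have "0 \<in> top_of_set {0..1} closure_of {0<..(1::real)}"
      using closure_greaterThanAtMost[of 0 "1::real"]
      by (simp add: closure_of_subtopology Int_absorb1 greaterThanAtMost_subseteq_atLeastAtMost_iff)
    ultimately have "N \<in> ?X closure_of (?path ` {0<..1})"
      using mix_measure_0[OF sets] by (metis image_subset_iff)
    moreover have "?path ` {0<..1} \<subseteq> {N \<in> P. full_support N}"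
      using assms that sets by (auto intro: full_support_mix_measure)
    ultimately show ?thesis
      using closure_of_mono by blast
  qed
  ultimately show ?thesis by blast
qed

lemma compact_metric_countable_pi_base:
  assumes "compact (UNIV :: 'a set)"
  obtains \<B> :: "'a::metric_space set set"
  where "countable \<B>" "\<And>B. B \<in> \<B> \<Longrightarrow> open B \<and> B \<noteq> {}"
    "\<And>U. open U \<Longrightarrow> U \<noteq> {} \<Longrightarrow> \<exists>B\<in>\<B>. B \<subseteq> U"
proof -
  have "\<exists>C :: 'a set. finite C \<and> UNIV \<subseteq> (\<Union>c\<in>C. ball c (1 / Suc n))" for n :: nat
  proof -
    have "UNIV \<subseteq> (\<Union>c. ball c (1 / Suc n))"
      by (auto intro: centre_in_ball[THEN iffD2])
    then show ?thesis
      using compactE_image[OF assms, of UNIV "\<lambda>c. ball c (1 / Suc n)"] by (metis open_ball)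
  qed
  then obtain C :: "nat \<Rightarrow> 'a set"
    where fin: "\<And>n. finite (C n)" and cover: "\<And>n. UNIV \<subseteq> (\<Union>c\<in>C n. ball c (1 / Suc n))"
    by metis
  define \<B> where "\<B> = (\<Union>n. (\<lambda>c. ball c (1 / Suc n)) ` C n)"
  have "countable \<B>"
    unfolding \<B>_def using fin by (auto intro: countable_finite)
  moreover have "open B \<and> B \<noteq> {}" if "B \<in> \<B>" for B
    using that by (auto simp: \<B>_def)
  moreover have "\<exists>B\<in>\<B>. B \<subseteq> U" if "open U" "U \<noteq> {}" for U
  proof -
    obtain x r where "0 < r" "ball x r \<subseteq> U"
      using \<open>open U\<close> \<open>U \<noteq> {}\<close> open_contains_ball by blast
    moreover obtain n :: nat where n: "inverse (Suc n) < r / 2"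
      using \<open>0 < r\<close> reals_Archimedean[of "r / 2"] by auto
    moreover obtain c where "c \<in> C n" "x \<in> ball c (1 / Suc n)"
      using cover by blast
    moreover have "ball c (1 / Suc n) \<subseteq> ball x r"
    proof
      fix y assume "y \<in> ball c (1 / Suc n)"
      then have "dist x y < 2 * (1 / Suc n)"
        using \<open>x \<in> ball c (1 / Suc n)\<close> dist_triangle2[of x y c] dist_commute[of x c] dist_commute[of y c]
        unfolding mem_ball by linarith
      then show "y \<in> ball x r"
        using n by (simp add: inverse_eq_divide)
    qed
    ultimately show ?thesis
      unfolding \<B>_def by blast
  qed
  ultimately show ?thesis using that by blast
qed

lemma full_support_iff_pi_base:
  assumes "sets M = sets borel"
    and "\<And>B. B \<in> \<B> \<Longrightarrow> open B \<and> B \<noteq> {}"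
    and "\<And>U. open U \<Longrightarrow> U \<noteq> {} \<Longrightarrow> \<exists>B\<in>\<B>. B \<subseteq> U"
  shows "full_support M \<longleftrightarrow> (\<forall>B\<in>\<B>. 0 < emeasure M B)"
proof
  assume "\<forall>B\<in>\<B>. 0 < emeasure M B"
  show "full_support M"
    unfolding full_support_def
  proof (intro allI impI)
    fix U :: "'a set" assume "open U \<and> U \<noteq> {}"
    then obtain B where "B \<in> \<B>" "B \<subseteq> U"
      using assms(3) by blast
    then have "emeasure M B \<le> emeasure M U"
      using assms(1,2) \<open>open U \<and> U \<noteq> {}\<close> by (intro emeasure_mono) auto
    then show "0 < emeasure M U"
      using \<open>\<forall>B\<in>\<B>. 0 < emeasure M B\<close> \<open>B \<in> \<B>\<close> by (auto intro: less_le_trans)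
  qed
qed (use assms(2) in \<open>auto simp: full_support_def\<close>)

lemma gdelta_in_full_support_measures:
  fixes P :: "'a::metric_space measure set"
  assumes "compact (UNIV :: 'a set)" "P \<subseteq> borel_prob_measures"
  shows "gdelta_in (subtopology weak_star_topology P) {M \<in> P. full_support M}"
proof -
  let ?X = "subtopology weak_star_topology P"
  obtain \<B> :: "'a set set" where "countable \<B>" and \<B>: "\<And>B. B \<in> \<B> \<Longrightarrow> open B \<and> B \<noteq> {}"
    "\<And>U. open U \<Longrightarrow> U \<noteq> {} \<Longrightarrow> \<exists>B\<in>\<B>. B \<subseteq> U"
    using compact_metric_countable_pi_base[OF assms(1)] by blast
  define pos where "pos B = {M \<in> P. 0 < emeasure M B}" for B
  have "openin ?X (pos B)" if "B \<in> \<B>" for B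
  proof -
    have "pos B = P \<inter> {M \<in> borel_prob_measures. 0 < emeasure M B}"
      using assms(2) by (auto simp: pos_def)
    then show ?thesis
      using openin_weak_star_topology_emeasure_pos \<B>(1)[OF that] by (auto simp: openin_subtopology)
  qed
  moreover have "gdelta_in ?X P"
    using gdelta_in_topspace[of ?X] assms(2) by (simp add: Int_absorb1)
  ultimately have "gdelta_in ?X (\<Inter>(insert P (pos ` \<B>)))"
    using \<open>countable \<B>\<close> by (intro gdelta_in_Inter) (auto intro: open_imp_gdelta_in)
  moreover have "{M \<in> P. full_support M} = \<Inter>(insert P (pos ` \<B>))"
    using assms(2) full_support_iff_pi_base[OF _ \<B>] by (auto simp: pos_def borel_prob_measures_def)
  ultimately show ?thesis
    by simp
qed

theorem theorem13:
  fixes F :: "'a::metric_space \<Rightarrow> 'a set"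
  assumes "compact (UNIV :: 'a set)"
    and "set_valued_map F"
  defines "T \<equiv> subtopology weak_star_topology (invariant_measures F)"
  defines "S \<equiv> {M \<in> invariant_measures F. full_support M}"
  shows "S = {} \<or> (gdelta_in T S \<and> T closure_of S = topspace T)"
proof (cases "S = {}")
  case False
  then obtain M where M: "M \<in> invariant_measures F" "full_support M"
    by (auto simp: S_def)
  have invariant: "invariant_measures F \<subseteq> borel_prob_measures"
    by (auto simp: invariant_measures_def)
  have "gdelta_in T S"
    unfolding T_def S_def using assms(1) invariant by (rule gdelta_in_full_support_measures)
  moreover have "T closure_of S = topspace T"
    using closure_of_full_support_measures[OF assms(1) invariant mix_measure_in_invariant_measures M]
      invariant
    by (auto simp: T_def S_def)
  ultimately show ?thesis by blast
qed simp

end
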